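(* Let $A$ be a $C^*$-algebra and let $x\in A$ (respectively $x\in M(A)$, the multiplier algebra of $A$). Suppose that $J=Ax=\{ax: a\in A\}$ is norm closed (so it is a closed left ideal). Then $J=Ae$ for some orthogonal projection $e\in J$ (respectively $e\in M(A)$).
   Context: Here $Ax$ denotes the set $\{ax : a\in A\}$ itself, not its closure. *)

theory Defs
  imports Complex_Main
begin

class cstar_algebra = real_normed_algebra + complete_space +
  fixes cscale :: "complex \<Rightarrow> 'a \<Rightarrow> 'a"
    and invol :: "'a \<Rightarrow> 'a"
  assumes cscale_add_left: "cscale (c + d) x = cscale c x + cscale d x"
    and cscale_add_right: "cscale c (x + y) = cscale c x + cscale c y"
    and cscale_mult: "cscale (c * d) x = cscale c (cscale d x)"
    and cscale_one: "cscale 1 x = x"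
    and cscale_of_real: "cscale (complex_of_real r) x = scaleR r x"
    and norm_cscale: "norm (cscale c x) = cmod c * norm x"
    and cscale_mult_left: "cscale c (x * y) = cscale c x * y"
    and cscale_mult_right: "cscale c (x * y) = x * cscale c y"
    and invol_add: "invol (x + y) = invol x + invol y"
    and invol_cscale: "invol (cscale c x) = cscale (cnj c) (invol x)"
    and invol_mult: "invol (x * y) = invol y * invol x"
    and invol_invol: "invol (invol x) = x"
    and cstar_identity: "norm (invol x * x) = (norm x)\<^sup>2"

text \<open>Multiplier algebra M(A), realised as double centralizers (L, R):
  L is left multiplication (m a = L a), R right multiplication (a m = R a),
  subject to a * L b = R a * b.\<close>

type_synonym 'a multiplier = "('a \<Rightarrow> 'a) \<times> ('a \<Rightarrow> 'a)"

definition is_multiplier :: "'a::cstar_algebra multiplier \<Rightarrow> bool" where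
  "is_multiplier m \<longleftrightarrow> (\<forall>a b. a * fst m b = snd m a * b)"

definition mult_times :: "'a::cstar_algebra multiplier \<Rightarrow> 'a multiplier \<Rightarrow> 'a multiplier" where
  "mult_times m n = (fst m \<circ> fst n, snd n \<circ> snd m)"

definition mult_star :: "'a::cstar_algebra multiplier \<Rightarrow> 'a multiplier" where
  "mult_star m = ((\<lambda>a. invol (snd m (invol a))), (\<lambda>a. invol (fst m (invol a))))"

definition left_mult_set :: "'a::cstar_algebra \<Rightarrow> 'a set" where
  "left_mult_set x = {a * x | a. True}"

definition mult_left_mult_set :: "'a::cstar_algebra multiplier \<Rightarrow> 'a set" where
  "mult_left_mult_set m = {snd m a | a. True}"

end

theory Submission
  imports Defs "HOL-Analysis.Analysis"
begin

text \<open>Multipliers are modelled as double centralizers; they form a ring \<open>M(A)\<close> with involution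
  whose elements are automatically bounded (Baire). If \<open>J = A m\<close> is closed, an open mapping
  argument shows that right multiplication by \<open>h = m\<^sup>* m\<close> is bounded below on \<open>J\<close>.
  Continuous functional calculus is replaced by a Cayley transform: for \<open>s = t h\<close> with
  \<open>\<parallel>s\<parallel> \<le> 1/2\<close>, the element \<open>U = (1 - i s)\<^sup>* (1 - i s)\<^sup>-\<^sup>1\<close> is unitary and
  \<open>1 - U = -2i s (1 - i s)\<^sup>-\<^sup>1\<close>, so the geometric sums of \<open>U\<close> stay bounded against \<open>s\<close>, and the
  negated Cesaro means of \<open>U\<^sup>k - 1\<close> are approximate right units of \<open>s\<close>. The lower bound on \<open>J\<close>
  makes them a Cauchy sequence; its limit \<open>w\<close> satisfies \<open>w s = s\<close> and \<open>A w \<subseteq> J\<close>. The C*-identity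
  applied to \<open>m - m w\<^sup>*\<close> gives \<open>m w\<^sup>* = m\<close>, and then \<open>w\<close> is a projection with \<open>A w = J\<close>. All
  approximants lie in the closed *-subalgebra generated by \<open>m\<close>, which consists of elements of \<open>A\<close>
  when \<open>m\<close> does.\<close>

lemma sum_power_mult_one_minus: "(\<Sum>k<n. X ^ k) * (1 - X) = 1 - (X::'b::{ring, monoid_mult}) ^ n"
proof (induction n)
  case (Suc n)
  have "(\<Sum>k<Suc n. X ^ k) * (1 - X) = (\<Sum>k<n. X ^ k) * (1 - X) + X ^ n * (1 - X)"
    by (simp add: distrib_right)
  also have "\<dots> = 1 - X ^ Suc n" using Suc by (simp add: algebra_simps power_commutes)
  finally show ?case .
qed simp

lemma one_minus_mult_sum_power: "(1 - X) * (\<Sum>k<n. X ^ k) = 1 - (X::'b::{ring, monoid_mult}) ^ n"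
proof (induction n)
  case (Suc n)
  have "(1 - X) * (\<Sum>k<Suc n. X ^ k) = (1 - X) * (\<Sum>k<n. X ^ k) + (1 - X) * X ^ n"
    by (simp add: distrib_left)
  also have "\<dots> = 1 - X ^ Suc n" using Suc by (simp add: algebra_simps)
  finally show ?case .
qed simp

lemma inverse_commute:
  fixes a b c :: "'b::monoid_mult"
  assumes "a * b = 1" "b * a = 1" "c * a = a * c"
  shows "c * b = b * c"
proof -
  have "b * c = b * c * (a * b)" using assms(1) by simp
  also have "\<dots> = b * (c * a) * b" by (simp add: mult.assoc)
  also have "\<dots> = (b * a) * c * b" using assms(3) by (simp add: mult.assoc)
  finally show ?thesis using assms(2) by (simp add: mult.assoc)
qed

lemma cscale_zero_left [simp]: "cscale 0 (x::'a::cstar_algebra) = 0"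
  using norm_cscale[of 0 x] by simp

lemma cscale_minus_left: "cscale (- c) (x::'a::cstar_algebra) = - cscale c x"
  using cscale_add_left[of "- c" c x] by (simp add: eq_neg_iff_add_eq_0)

lemma cscale_commute: "cscale c (cscale d (x::'a::cstar_algebra)) = cscale d (cscale c x)"
  by (metis cscale_mult mult.commute)

lemma invol_zero [simp]: "invol (0::'a::cstar_algebra) = 0"
  using invol_add[of "0::'a" 0] by simp

lemma invol_minus: "invol (- x) = - invol (x::'a::cstar_algebra)"
  using invol_add[of "- x" x] by (simp add: eq_neg_iff_add_eq_0)

lemma invol_diff: "invol (x - y) = invol x - invol (y::'a::cstar_algebra)"
  using invol_add[of x "- y"] by (simp add: invol_minus)

lemma norm_invol [simp]: "norm (invol (x::'a::cstar_algebra)) = norm x"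
proof -
  have le: "norm y \<le> norm (invol y)" for y :: 'a
  proof (cases "y = 0")
    case False
    have "norm y * norm y = norm (invol y * y)" by (simp add: cstar_identity power2_eq_square)
    also have "\<dots> \<le> norm (invol y) * norm y" by (rule norm_mult_ineq)
    finally show ?thesis using False by simp
  qed simp
  show ?thesis using le[of x] le[of "invol x"] by (simp add: invol_invol)
qed

lemma cstar_identity_right: "norm ((x::'a::cstar_algebra) * invol x) = (norm x)\<^sup>2"
  using cstar_identity[of "invol x"] by (simp add: invol_invol)

lemma cstar_left_nondegenerate: "(\<And>a. a * z = 0) \<Longrightarrow> (z::'a::cstar_algebra) = 0"
  using cstar_identity[of z] by force

lemma cstar_right_nondegenerate: "(\<And>a. z * a = 0) \<Longrightarrow> (z::'a::cstar_algebra) = 0"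
  using cstar_identity_right[of z] by force

section \<open>The multiplier algebra\<close>

typedef (overloaded) ('a::cstar_algebra) mult_alg = "{m :: 'a multiplier. is_multiplier m}"
  by (rule exI[of _ "(id, id)"]) (simp add: is_multiplier_def)

text \<open>\<open>ract b X\<close> is the product \<open>b X\<close> and \<open>lact X b\<close> the product \<open>X b\<close>, for \<open>b\<close> in the algebra.\<close>

definition ract :: "'a::cstar_algebra \<Rightarrow> 'a mult_alg \<Rightarrow> 'a" where
  "ract b X = snd (Rep_mult_alg X) b"

definition lact :: "'a::cstar_algebra mult_alg \<Rightarrow> 'a \<Rightarrow> 'a" where
  "lact X b = fst (Rep_mult_alg X) b"

abbreviation left_ideal :: "'a::cstar_algebra mult_alg \<Rightarrow> 'a set" where
  "left_ideal X \<equiv> range (\<lambda>a. ract a X)"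

lemma ract_lact: "a * lact X b = ract a X * b"
  using Rep_mult_alg[of X] by (simp add: is_multiplier_def ract_def lact_def)

lemma ract_add [simp]: "ract (a + b) X = ract a X + ract b X"
  using cstar_right_nondegenerate[of "ract (a + b) X - (ract a X + ract b X)"]
  by (simp add: algebra_simps ract_lact[symmetric])

lemma lact_add [simp]: "lact X (a + b) = lact X a + lact X b"
  using cstar_left_nondegenerate[of "lact X (a + b) - (lact X a + lact X b)"]
  by (simp add: algebra_simps ract_lact)

lemma ract_cscale [simp]: "ract (cscale c a) X = cscale c (ract a X)"
  using cstar_right_nondegenerate[of "ract (cscale c a) X - cscale c (ract a X)"]
  by (simp add: algebra_simps ract_lact[symmetric] cscale_mult_left[symmetric] cscale_mult_right)

lemma lact_cscale [simp]: "lact X (cscale c a) = cscale c (lact X a)"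
  using cstar_left_nondegenerate[of "lact X (cscale c a) - cscale c (lact X a)"]
  by (simp add: algebra_simps ract_lact cscale_mult_left[symmetric] cscale_mult_right[symmetric])

lemma ract_zero [simp]: "ract 0 X = 0"
  using ract_add[of 0 0 X] by simp

lemma lact_zero [simp]: "lact X 0 = 0"
  using lact_add[of X 0 0] by simp

lemma ract_minus [simp]: "ract (- a) X = - ract a X"
  using ract_add[of "- a" a X] by (simp add: eq_neg_iff_add_eq_0)

lemma ract_diff [simp]: "ract (a - b) X = ract a X - ract b X"
  using ract_add[of a "- b" X] by simp

lemma ract_scaleR [simp]: "ract (scaleR r a) X = scaleR r (ract a X)"
  using ract_cscale[of "complex_of_real r" a X] by (simp add: cscale_of_real)

lemma lact_scaleR [simp]: "lact X (scaleR r a) = scaleR r (lact X a)"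
  using lact_cscale[of X "complex_of_real r" a] by (simp add: cscale_of_real)

text \<open>Nondegeneracy of the algebra lets the right action determine the left one.\<close>

lemma mult_alg_eqI: assumes "\<And>b. ract b X = ract b Y" shows "X = Y"
proof -
  have "a * (lact X b - lact Y b) = 0" for a b
    by (simp add: algebra_simps ract_lact assms)
  then have "lact X b = lact Y b" for b
    using cstar_left_nondegenerate[of "lact X b - lact Y b"] by simp
  with assms have "Rep_mult_alg X = Rep_mult_alg Y"
    by (simp add: prod_eq_iff fun_eq_iff ract_def lact_def)
  then show ?thesis by (simp add: Rep_mult_alg_inject)
qed

lemma ract_Abs: "is_multiplier m \<Longrightarrow> ract b (Abs_mult_alg m) = snd m b"
  by (simp add: ract_def Abs_mult_alg_inverse)

lemma lact_Abs: "is_multiplier m \<Longrightarrow> lact (Abs_mult_alg m) b = fst m b"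
  by (simp add: lact_def Abs_mult_alg_inverse)

lemma is_multiplier_pointwise:
  assumes "\<And>a b. a * L b = R a * b"
  shows "is_multiplier (L, R)"
  using assms by (simp add: is_multiplier_def)

lemma is_multiplier_Rep_mult_times: "is_multiplier (mult_times (Rep_mult_alg X) (Rep_mult_alg Y))"
  by (simp add: is_multiplier_def mult_times_def ract_lact[unfolded ract_def lact_def])

lemma is_multiplier_Rep_mult_star: "is_multiplier (mult_star (Rep_mult_alg X))"
proof -
  have "a * invol (ract (invol b) X) = invol (lact X (invol a)) * b" for a b
    using arg_cong[OF ract_lact[of "invol b" X "invol a"], of invol]
    by (simp add: invol_mult invol_invol)
  then show ?thesis by (simp add: is_multiplier_def mult_star_def ract_def lact_def)
qed

instantiation mult_alg :: (cstar_algebra) "{ring, monoid_mult}"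
begin

definition zero_mult_alg_def: "0 = Abs_mult_alg (\<lambda>b. 0, \<lambda>b. 0)"
definition plus_mult_alg_def: "X + Y = Abs_mult_alg (\<lambda>b. lact X b + lact Y b, \<lambda>b. ract b X + ract b Y)"
definition minus_mult_alg_def: "X - Y = Abs_mult_alg (\<lambda>b. lact X b - lact Y b, \<lambda>b. ract b X - ract b Y)"
definition uminus_mult_alg_def: "- X = Abs_mult_alg (\<lambda>b. - lact X b, \<lambda>b. - ract b X)"
definition times_mult_alg_def: "X * Y = Abs_mult_alg (mult_times (Rep_mult_alg X) (Rep_mult_alg Y))"
definition one_mult_alg_def: "1 = Abs_mult_alg (id, id)"

lemma ract_plus_mult_alg [simp]: "ract b (X + Y) = ract b X + ract b Y"
  and ract_minus_mult_alg [simp]: "ract b (X - Y) = ract b X - ract b Y"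
  and ract_uminus_mult_alg [simp]: "ract b (- X) = - ract b X"
  and ract_zero_mult_alg [simp]: "ract b 0 = 0"
  and ract_one_mult_alg [simp]: "ract b 1 = b"
  and ract_times_mult_alg [simp]: "ract b (X * Y) = ract (ract b X) Y"
  and lact_plus_mult_alg [simp]: "lact (X + Y) b = lact X b + lact Y b"
  and lact_minus_mult_alg [simp]: "lact (X - Y) b = lact X b - lact Y b"
  and lact_uminus_mult_alg [simp]: "lact (- X) b = - lact X b"
  and lact_zero_mult_alg [simp]: "lact 0 b = 0"
  and lact_one_mult_alg [simp]: "lact 1 b = b"
  and lact_times_mult_alg [simp]: "lact (X * Y) b = lact X (lact Y b)"
  by (simp_all add: zero_mult_alg_def plus_mult_alg_def minus_mult_alg_def uminus_mult_alg_def
      times_mult_alg_def one_mult_alg_def ract_Abs lact_Abs is_multiplier_pointwise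
      is_multiplier_Rep_mult_times algebra_simps ract_lact)
    (simp_all add: mult_times_def ract_def lact_def)

instance
  by standard (rule mult_alg_eqI; simp add: algebra_simps)+

end

definition mscalar :: "complex \<Rightarrow> 'a::cstar_algebra mult_alg" where
  "mscalar c = Abs_mult_alg (cscale c, cscale c)"

definition madjoint :: "'a::cstar_algebra mult_alg \<Rightarrow> 'a mult_alg" where
  "madjoint X = Abs_mult_alg (mult_star (Rep_mult_alg X))"

definition mult_of :: "'a::cstar_algebra \<Rightarrow> 'a mult_alg" where
  "mult_of z = Abs_mult_alg (\<lambda>b. z * b, \<lambda>b. b * z)"

lemma ract_mscalar [simp]: "ract b (mscalar c) = cscale c b"
  and lact_mscalar [simp]: "lact (mscalar c) b = cscale c b"
  by (simp_all add: mscalar_def ract_Abs lact_Abs is_multiplier_pointwise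
      cscale_mult_left cscale_mult_right[symmetric])

lemma ract_madjoint: "ract b (madjoint X) = invol (lact X (invol b))"
  and lact_madjoint: "lact (madjoint X) b = invol (ract (invol b) X)"
  unfolding madjoint_def ract_Abs[OF is_multiplier_Rep_mult_star]
    lact_Abs[OF is_multiplier_Rep_mult_star]
  by (simp_all add: mult_star_def ract_def lact_def)

lemma ract_mult_of [simp]: "ract b (mult_of z) = b * z"
  and lact_mult_of [simp]: "lact (mult_of z) b = z * b"
  by (simp_all add: mult_of_def ract_Abs lact_Abs is_multiplier_pointwise mult.assoc)

lemma invol_ract: "invol (ract b X) = lact (madjoint X) (invol b)"
  by (simp add: lact_madjoint invol_invol)

lemma madjoint_madjoint [simp]: "madjoint (madjoint X) = X"
  by (rule mult_alg_eqI) (simp add: ract_madjoint lact_madjoint invol_invol)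

lemma madjoint_add: "madjoint (X + Y) = madjoint X + madjoint Y"
  by (rule mult_alg_eqI) (simp add: ract_madjoint invol_add)

lemma madjoint_diff: "madjoint (X - Y) = madjoint X - madjoint Y"
  by (rule mult_alg_eqI) (simp add: ract_madjoint invol_diff)

lemma madjoint_zero [simp]: "madjoint 0 = 0"
  by (rule mult_alg_eqI) (simp add: ract_madjoint)

lemma madjoint_one [simp]: "madjoint 1 = 1"
  by (rule mult_alg_eqI) (simp add: ract_madjoint invol_invol)

lemma madjoint_mult: "madjoint (X * Y) = madjoint Y * madjoint X"
  by (rule mult_alg_eqI) (simp add: ract_madjoint invol_invol)

lemma madjoint_mscalar: "madjoint (mscalar c) = mscalar (cnj c)"
  by (rule mult_alg_eqI) (simp add: ract_madjoint invol_cscale invol_invol)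

lemma madjoint_mult_of: "madjoint (mult_of z) = mult_of (invol z)"
  by (rule mult_alg_eqI) (simp add: ract_madjoint invol_mult invol_invol)

lemma mscalar_mult: "mscalar (c * d) = mscalar c * mscalar d"
  by (rule mult_alg_eqI) (simp add: cscale_mult cscale_commute)

lemma mscalar_minus: "mscalar (- c) = - mscalar c"
  by (rule mult_alg_eqI) (simp add: cscale_minus_left)

lemma mscalar_one [simp]: "mscalar 1 = 1"
  by (rule mult_alg_eqI) (simp add: cscale_one)

lemma mscalar_add: "mscalar (c + d) = mscalar c + mscalar d"
  by (rule mult_alg_eqI) (simp add: cscale_add_left)

lemma sum_one_mult_alg: "(\<Sum>k<n. 1) = mscalar (of_nat n)"
proof (induction n)
  case 0
  show ?case by (rule mult_alg_eqI) simp
next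
  case (Suc n)
  then show ?case by (simp add: mscalar_add add.commute)
qed

lemma mscalar_commute: "mscalar c * X = X * mscalar c"
  by (rule mult_alg_eqI) simp

lemma mult_mscalar_left: "X * (mscalar c * Y) = mscalar c * (X * Y)"
  by (rule mult_alg_eqI) simp

lemma mult_of_add: "mult_of (z + w) = mult_of z + mult_of w"
  by (rule mult_alg_eqI) (simp add: distrib_left)

lemma mult_of_diff: "mult_of (z - w) = mult_of z - mult_of w"
  by (rule mult_alg_eqI) (simp add: right_diff_distrib)

lemma mult_of_zero: "mult_of 0 = 0"
  by (rule mult_alg_eqI) simp

lemma mult_of_mult: "mult_of (z * w) = mult_of z * mult_of w"
  by (rule mult_alg_eqI) (simp add: mult.assoc)

lemma mscalar_mult_of: "mscalar c * mult_of z = mult_of (cscale c z)"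
  by (rule mult_alg_eqI) (simp add: cscale_mult_left[symmetric] cscale_mult_right[symmetric])

lemma mult_of_inject: "mult_of z = mult_of w \<Longrightarrow> z = w"
  using cstar_left_nondegenerate[of "z - w"] by (metis ract_mult_of right_diff_distrib eq_iff_diff_eq_0)

definition mbound :: "'a::cstar_algebra mult_alg \<Rightarrow> real \<Rightarrow> bool" where
  "mbound X r \<longleftrightarrow> (\<forall>b. norm (ract b X) \<le> r * norm b)"

lemma mboundD: "mbound X r \<Longrightarrow> norm (ract b X) \<le> r * norm b"
  unfolding mbound_def by blast

lemma mbound_add: "mbound X r \<Longrightarrow> mbound Y s \<Longrightarrow> mbound (X + Y) (r + s)"
  unfolding mbound_def by (metis ract_plus_mult_alg add_mono distrib_right norm_triangle_le)

lemma mbound_diff: "mbound X r \<Longrightarrow> mbound Y s \<Longrightarrow> mbound (X - Y) (r + s)"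
  unfolding mbound_def by (metis ract_minus_mult_alg add_mono distrib_right norm_triangle_le_diff)

lemma mbound_uminus: "mbound X r \<Longrightarrow> mbound (- X) r"
  unfolding mbound_def by simp

lemma mbound_mult:
  assumes "mbound X r" "mbound Y s" "0 \<le> s"
  shows "mbound (X * Y) (r * s)"
  unfolding mbound_def
proof
  fix b
  have "norm (ract b (X * Y)) \<le> s * norm (ract b X)" using assms(2) by (simp add: mboundD)
  also have "\<dots> \<le> s * (r * norm b)" using assms(1,3) by (simp add: mboundD mult_left_mono)
  finally show "norm (ract b (X * Y)) \<le> r * s * norm b" by (simp add: ac_simps)
qed

lemma mbound_mscalar: "mbound (mscalar c) (cmod c)"
  unfolding mbound_def by (simp add: norm_cscale)

lemma mbound_one: "mbound 1 1"
  unfolding mbound_def by simp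

lemma mbound_zero: "mbound 0 0"
  unfolding mbound_def by simp

lemma mbound_mono: "mbound X r \<Longrightarrow> r \<le> r' \<Longrightarrow> mbound X r'"
  unfolding mbound_def by (meson mult_right_mono norm_ge_zero order_trans)

lemma mbound_power: "mbound X r \<Longrightarrow> 0 \<le> r \<Longrightarrow> mbound (X ^ n) (r ^ n)"
proof (induction n)
  case (Suc n)
  then have "mbound (X ^ n * X) (r ^ n * r)" by (intro mbound_mult) simp_all
  then show ?case by (simp add: power_commutes mult.commute)
qed (simp add: mbound_one)

lemma mbound_sum: "(\<And>k. k \<in> A \<Longrightarrow> mbound (f k) (r k)) \<Longrightarrow> mbound (sum f A) (sum r A)"
  by (induction A rule: infinite_finite_induct) (simp_all add: mbound_zero mbound_add)

lemma mbound_zero_iff: "(\<forall>e>0. mbound X e) \<longleftrightarrow> X = 0"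
proof
  assume small: "\<forall>e>0. mbound X e"
  show "X = 0"
  proof (rule mult_alg_eqI)
    fix b
    have "norm (ract b X) \<le> 0 + e" if "e > 0" for e
    proof -
      have "mbound X (e / (norm b + 1))" using small that by (simp add: add_nonneg_pos)
      then have "norm (ract b X) \<le> e / (norm b + 1) * norm b" by (rule mboundD)
      also have "\<dots> \<le> e / (norm b + 1) * (norm b + 1)"
        using that by (intro mult_left_mono) simp_all
      also have "\<dots> = e" using add_nonneg_pos[OF norm_ge_zero zero_less_one, of b] by simp
      finally show ?thesis by simp
    qed
    then show "ract b X = ract b 0" using field_le_epsilon[of "norm (ract b X)" 0] by simp
  qed
qed (simp add: mbound_def)

text \<open>The C*-identity transfers bounds from right to left multiplication.\<close>

lemma norm_lact_le: assumes "mbound X r" shows "norm (lact X b) \<le> r * norm b"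
proof (cases "lact X b = 0")
  case True
  then show ?thesis using order_trans[OF norm_ge_zero mboundD[OF assms, of b]] by simp
next
  case False
  let ?y = "lact X b"
  have "norm ?y * norm ?y = norm (invol ?y * ?y)" by (simp add: cstar_identity power2_eq_square)
  also have "invol ?y * ?y = ract (invol ?y) X * b" by (rule ract_lact)
  also have "norm \<dots> \<le> norm (ract (invol ?y) X) * norm b" by (rule norm_mult_ineq)
  also have "\<dots> \<le> (r * norm ?y) * norm b"
    using mboundD[OF assms, of "invol ?y"] by (simp add: mult_right_mono)
  finally have "norm ?y * norm ?y \<le> norm ?y * (r * norm b)" by (simp only: ac_simps)
  then show ?thesis using False by (simp add: mult_le_cancel_left)
qed

lemma mbound_madjoint: assumes "mbound X r" shows "mbound (madjoint X) r"
  unfolding mbound_def ract_madjoint using norm_lact_le[OF assms, of "invol b" for b] by simp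

lemma norm_le_of_mbound_mult_of: assumes "mbound (mult_of z) r" "0 \<le> r" shows "norm z \<le> r"
proof (cases "z = 0")
  case False
  have "norm z * norm z = norm (invol z * z)" by (simp add: cstar_identity power2_eq_square)
  also have "\<dots> \<le> r * norm z" using mboundD[OF assms(1), of "invol z"] by simp
  finally show ?thesis using False by simp
qed (use assms in simp)

lemma norm_ract_unitary: assumes "X * madjoint X = 1" shows "norm (ract b X) = norm b"
proof -
  have "(norm (ract b X))\<^sup>2 = norm (ract b (X * madjoint X) * invol b)"
    by (simp add: cstar_identity_right[symmetric] invol_ract ract_lact)
  then have "(norm (ract b X))\<^sup>2 = (norm b)\<^sup>2" using assms by (simp add: cstar_identity_right)
  then show ?thesis by (simp add: power2_eq_iff_nonneg)
qed

lemma mbound_unitary: "X * madjoint X = 1 \<Longrightarrow> mbound X 1"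
  unfolding mbound_def by (simp add: norm_ract_unitary)

lemma unitary_power: "X * madjoint X = 1 \<Longrightarrow> X ^ n * madjoint (X ^ n) = 1"
proof (induction n)
  case (Suc n)
  have "X ^ Suc n * madjoint (X ^ Suc n) = X * (X ^ n * madjoint (X ^ n)) * madjoint X"
    by (simp add: madjoint_mult mult.assoc power_commutes)
  with Suc show ?case by simp
qed simp

lemma mbound_geometric_sum_unitary:
  assumes "U * madjoint U = 1" "(1 - U) * A = B" "mbound A a" "0 \<le> a"
  shows "mbound ((\<Sum>k<n. U ^ k) * B) (2 * a)"
proof -
  have "(\<Sum>k<n. U ^ k) * B = (1 - U ^ n) * A"
    using assms(2) sum_power_mult_one_minus[of U n] by (metis mult.assoc)
  moreover have "mbound (1 - U ^ n) (1 + 1)"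
    using assms(1) by (intro mbound_diff mbound_one mbound_unitary unitary_power)
  ultimately show ?thesis using mbound_mult[of "1 - U ^ n" "1 + 1" A a] assms(3,4) by simp
qed

lemma madjoint_mult_self_eq_0: assumes "madjoint D * D = 0" shows "D = 0"
proof -
  have "ract b (madjoint D) = 0" for b
  proof -
    have "ract b (madjoint D) * invol (ract b (madjoint D)) = ract b (madjoint D * D) * invol b"
      by (simp add: invol_ract ract_lact)
    then show ?thesis using assms cstar_identity_right[of "ract b (madjoint D)"] by simp
  qed
  then have "madjoint D = 0" by (intro mult_alg_eqI) simp
  then show ?thesis by (metis madjoint_madjoint madjoint_zero)
qed

section \<open>Consequences of Baire's theorem\<close>

lemma Baire_closed_cover:
  fixes J :: "'a::{real_normed_vector,complete_space} set" and F :: "nat \<Rightarrow> 'a set"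
  assumes J: "closed J" "J \<noteq> {}" and F: "\<And>n. closed (F n)" and cover: "J \<subseteq> (\<Union>n. F n)"
  shows "\<exists>n y r. y \<in> J \<and> r > 0 \<and> ball y r \<inter> J \<subseteq> F n"
proof (rule ccontr)
  assume no_ball: "\<not> ?thesis"
  let ?X = "top_of_set J"
  have empty_interior: "?X interior_of (F n \<inter> J) = {}" for n
  proof (rule ccontr)
    assume "?X interior_of (F n \<inter> J) \<noteq> {}"
    then obtain y U where U: "openin ?X U" "y \<in> U" "U \<subseteq> F n \<inter> J"
      unfolding interior_of_def by blast
    then obtain V where V: "open V" "U = J \<inter> V" unfolding openin_open by blast
    then obtain r where "r > 0" "ball y r \<subseteq> V" using U(2) open_contains_ball by blast
    then show False using no_ball U V by blast
  qed
  have "?X interior_of \<Union>(range (\<lambda>n. F n \<inter> J)) = {}"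
  proof (rule Baire_category_alt)
    show "completely_metrizable_space ?X \<or> locally_compact_space ?X \<and> regular_space ?X"
      using completely_metrizable_space_closedin[OF completely_metrizable_space_euclidean]
        J(1) closed_closedin by blast
    show "countable (range (\<lambda>n. F n \<inter> J))" by simp
    fix T assume "T \<in> range (\<lambda>n. F n \<inter> J)"
    then obtain n where "T = F n \<inter> J" by blast
    then show "closedin ?X T \<and> ?X interior_of T = {}"
      using F[of n] empty_interior[of n] closedin_closed_Int[of "F n" J] by (simp add: Int_commute)
  qed
  moreover have "\<Union>(range (\<lambda>n. F n \<inter> J)) = J" using cover by blast
  ultimately show False using J(2) interior_of_topspace[of ?X] by simp
qed

text \<open>Automatic boundedness of multipliers: Baire's theorem bounds \<open>a X b\<close> for \<open>a\<close>, \<open>b\<close> in a ball,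
  and the C*-identity turns this into a bound on \<open>a X\<close>.\<close>

lemma lact_local_bound: "\<exists>r>0. \<exists>C. \<forall>a b. norm a < r \<longrightarrow> norm b \<le> 1 \<longrightarrow> norm (a * lact X b) \<le> C"
proof -
  define F where "F n = {a. \<forall>b. norm b \<le> 1 \<longrightarrow> norm (a * lact X b) \<le> real n}" for n
  have "closed (F n)" for n
  proof -
    have "F n = (\<Inter>b\<in>{b. norm b \<le> 1}. {a. norm (a * lact X b) \<le> real n})"
      unfolding F_def by blast
    then show ?thesis by (simp add: closed_INT closed_Collect_le continuous_intros)
  qed
  moreover have "UNIV \<subseteq> (\<Union>n. F n)"
  proof
    fix a :: 'a
    obtain n where n: "norm (ract a X) \<le> real n" using real_arch_simple by blast
    have "norm (a * lact X b) \<le> real n" if "norm b \<le> 1" for b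
    proof -
      have "norm (a * lact X b) \<le> norm (ract a X) * norm b"
        by (simp add: ract_lact norm_mult_ineq)
      also have "\<dots> \<le> norm (ract a X)" using that by (intro mult_left_le) simp_all
      finally show ?thesis using n by simp
    qed
    then show "a \<in> (\<Union>n. F n)" unfolding F_def by blast
  qed
  ultimately obtain n y r where y: "r > 0" "ball y r \<subseteq> F n"
    using Baire_closed_cover[of UNIV F] by auto
  have "norm (a * lact X b) \<le> 2 * real n" if "norm a < r" "norm b \<le> 1" for a b
  proof -
    have "y + a \<in> F n" "y \<in> F n" using y that by (auto simp: dist_norm)
    then have "norm ((y + a) * lact X b) \<le> real n" "norm (y * lact X b) \<le> real n"
      unfolding F_def using that by auto
    then show ?thesis using norm_triangle_ineq4[of "(y + a) * lact X b" "y * lact X b"]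
      by (simp add: algebra_simps)
  qed
  then show ?thesis using y(1) by blast
qed

lemma lact_bilinear_bound: "\<exists>K\<ge>0. \<forall>a b. norm (a * lact X b) \<le> K * norm a * norm b"
proof -
  obtain r C where r: "r > 0" and C: "\<And>a b. norm a < r \<Longrightarrow> norm b \<le> 1 \<Longrightarrow> norm (a * lact X b) \<le> C"
    using lact_local_bound by blast
  have "C \<ge> 0" using C[of 0 0] r by simp
  have "norm (a * lact X b) \<le> (2 * C / r) * norm a * norm b" for a b
  proof (cases "a = 0 \<or> b = 0")
    case False
    define t where "t = r / (2 * norm a)"
    define u where "u = 1 / norm b"
    have tu: "t > 0" "u > 0" using False r by (simp_all add: t_def u_def)
    have "t * u * norm (a * lact X b) = norm (scaleR t a * lact X (scaleR u b))"
      using tu by simp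
    also have "\<dots> \<le> C" using False r by (intro C) (simp_all add: t_def u_def)
    finally show ?thesis using False r tu by (simp add: t_def u_def field_simps)
  qed auto
  then show ?thesis using \<open>C \<ge> 0\<close> r by (intro exI[of _ "2 * C / r"]) simp
qed

lemma mult_alg_bounded: "\<exists>K\<ge>0. mbound X K"
proof -
  obtain K where "K \<ge> 0" and K: "\<And>a b. norm (a * lact X b) \<le> K * norm a * norm b"
    using lact_bilinear_bound by blast
  have "norm (ract a X) \<le> K * norm a" for a
  proof (cases "ract a X = 0")
    case False
    let ?y = "ract a X"
    have "norm ?y * norm ?y = norm (?y * invol ?y)"
      using cstar_identity_right[of ?y] by (simp add: power2_eq_square)
    also have "?y * invol ?y = a * lact X (invol ?y)" by (simp add: ract_lact)
    also have "norm (a * lact X (invol ?y)) \<le> (K * norm a) * norm ?y" using K[of a "invol ?y"] by simp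
    finally show ?thesis using False by (simp add: mult_le_cancel_right)
  next
    case True
    then show ?thesis using \<open>K \<ge> 0\<close> by simp
  qed
  then show ?thesis using \<open>K \<ge> 0\<close> unfolding mbound_def by blast
qed

text \<open>Open mapping theorem for \<open>a \<mapsto> a m\<close>, in approximate form.\<close>

lemma ract_approx_of_ball:
  assumes y0: "y0 \<in> left_ideal m"
    and ball: "ball y0 r \<inter> left_ideal m \<subseteq> closure ((\<lambda>a. ract a m) ` cball 0 C)"
    and y: "y \<in> left_ideal m" "norm y < r" and e: "e > 0"
  shows "\<exists>a. norm a \<le> 2 * C \<and> norm (ract a m - y) < e"
proof -
  have approx: "\<exists>a. norm a \<le> C \<and> norm (ract a m - u) < e / 2" if u: "u \<in> ball y0 r \<inter> left_ideal m" for u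
  proof -
    have "u \<in> closure ((\<lambda>a. ract a m) ` cball 0 C)" by (rule subsetD[OF ball u])
    then have "\<forall>e>0. \<exists>v\<in>(\<lambda>a. ract a m) ` cball 0 C. dist v u < e"
      by (simp only: closure_approachable)
    then obtain v where v: "v \<in> (\<lambda>a. ract a m) ` cball 0 C" "dist v u < e / 2"
      using e by (meson half_gt_zero)
    then obtain a where "a \<in> cball 0 C" "v = ract a m" by blast
    then show ?thesis using v(2) by (intro exI[of _ a]) (simp add: dist_norm)
  qed
  obtain b c where "y = ract b m" and "y0 = ract c m" using y(1) y0 by blast
  then have "y0 + y = ract (c + b) m" by simp
  then have "y0 + y \<in> left_ideal m" by (rule range_eqI)
  moreover have "y0 + y \<in> ball y0 r" "y0 \<in> ball y0 r"
    using y(2) le_less_trans[OF norm_ge_zero y(2)] by (simp_all add: dist_norm)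
  ultimately have "y0 + y \<in> ball y0 r \<inter> left_ideal m" "y0 \<in> ball y0 r \<inter> left_ideal m"
    using y0 by simp_all
  then obtain a1 a2 where a1: "norm a1 \<le> C" "norm (ract a1 m - (y0 + y)) < e / 2"
    and a2: "norm a2 \<le> C" "norm (ract a2 m - y0) < e / 2"
    using approx by meson
  have "ract (a1 - a2) m - y = (ract a1 m - (y0 + y)) - (ract a2 m - y0)"
    by (simp add: algebra_simps)
  then have "norm (ract (a1 - a2) m - y) \<le> norm (ract a1 m - (y0 + y)) + norm (ract a2 m - y0)"
    by (metis norm_triangle_ineq4)
  then have "norm (ract (a1 - a2) m - y) < e" using a1 a2 by linarith
  moreover have "norm (a1 - a2) \<le> 2 * C" using a1 a2 norm_triangle_ineq4[of a1 a2] by linarith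
  ultimately show ?thesis by blast
qed

lemma ract_local_approx:
  assumes closed: "closed (left_ideal m)"
  shows "\<exists>r>0. \<exists>C\<ge>0. \<forall>y\<in>left_ideal m. norm y < r \<longrightarrow>
           (\<forall>e>0. \<exists>a. norm a \<le> C \<and> norm (ract a m - y) < e)"
proof -
  define F where "F n = closure ((\<lambda>a. ract a m) ` cball 0 (real n))" for n
  have cover: "left_ideal m \<subseteq> (\<Union>n. F n)"
  proof
    fix y assume "y \<in> left_ideal m"
    then obtain a where a: "y = ract a m" by blast
    obtain n where "norm a \<le> real n" using real_arch_simple by blast
    then have "y \<in> (\<lambda>a. ract a m) ` cball 0 (real n)" using a by auto
    then have "y \<in> F n" unfolding F_def by (rule closure_subset[THEN subsetD])
    then show "y \<in> (\<Union>n. F n)" by blast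
  qed
  have nonempty: "left_ideal m \<noteq> {}" by blast
  have closed_F: "closed (F n)" for n unfolding F_def by simp
  obtain n y0 r where y0: "y0 \<in> left_ideal m" "r > 0" "ball y0 r \<inter> left_ideal m \<subseteq> F n"
    using Baire_closed_cover[OF closed nonempty closed_F cover] by blast
  have "2 * real n \<ge> 0" by simp
  then show ?thesis
    using y0(2) ract_approx_of_ball[OF y0(1) y0(3)[unfolded F_def]] by blast
qed

lemma ract_approx:
  assumes "closed (left_ideal m)"
  shows "\<exists>M\<ge>0. \<forall>y\<in>left_ideal m. \<forall>e>0. \<exists>a. norm a \<le> M * norm y \<and> norm (ract a m - y) < e"
proof -
  obtain r C where r: "r > 0" "C \<ge> 0" and small: "\<And>y e. y \<in> left_ideal m \<Longrightarrow> norm y < r \<Longrightarrow> e > 0 \<Longrightarrow>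
      \<exists>a. norm a \<le> C \<and> norm (ract a m - y) < e"
    using ract_local_approx[OF assms] by blast
  have "\<exists>a. norm a \<le> (2 * C / r) * norm y \<and> norm (ract a m - y) < e"
    if y: "y \<in> left_ideal m" and e: "e > 0" for y e
  proof (cases "y = 0")
    case True
    then show ?thesis using e by (intro exI[of _ 0]) simp
  next
    case False
    define t where "t = r / (2 * norm y)"
    have t: "t > 0" using False r by (simp add: t_def)
    have "scaleR t y \<in> left_ideal m" using y by (auto simp flip: ract_scaleR)
    moreover have "norm (scaleR t y) < r" using False r t by (simp add: t_def)
    ultimately obtain a where a: "norm a \<le> C" "norm (ract a m - scaleR t y) < e * t"
      using small e t by (meson mult_pos_pos)
    have "ract (scaleR (1 / t) a) m - y = scaleR (1 / t) (ract a m - scaleR t y)"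
      using t by (simp add: algebra_simps)
    then have "norm (ract (scaleR (1 / t) a) m - y) = norm (ract a m - scaleR t y) / t"
      using t by simp
    also have "\<dots> < e" using a(2) t by (simp add: divide_less_eq)
    finally have "norm (ract (scaleR (1 / t) a) m - y) < e" .
    moreover have "norm (scaleR (1 / t) a) \<le> (2 * C / r) * norm y"
      using a(1) t False r by (simp add: t_def field_simps)
    ultimately show ?thesis by blast
  qed
  then show ?thesis using r by (intro exI[of _ "2 * C / r"]) auto
qed

lemma norm_le_ract_madjoint:
  assumes "closed (left_ideal m)"
  shows "\<exists>M\<ge>0. \<forall>y\<in>left_ideal m. norm y \<le> M * norm (ract y (madjoint m))"
proof -
  obtain M where M: "M \<ge> 0" "\<And>y e. y \<in> left_ideal m \<Longrightarrow> e > 0 \<Longrightarrow>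
      \<exists>a. norm a \<le> M * norm y \<and> norm (ract a m - y) < e"
    using ract_approx[OF assms] by blast
  have "norm y \<le> M * norm (ract y (madjoint m))" if y: "y \<in> left_ideal m" for y
  proof (cases "y = 0")
    case False
    have key: "norm y * norm y \<le> M * norm (ract y (madjoint m)) * norm y + norm y * e"
      if e: "e > 0" for e
    proof -
      obtain a where a: "norm a \<le> M * norm y" "norm (ract a m - y) < e" using M(2) y e by blast
      have "norm y * norm y = norm (y * invol y)"
        using cstar_identity_right[of y] by (simp add: power2_eq_square)
      also have "y * invol y = y * invol (ract a m) - y * invol (ract a m - y)"
        by (simp add: invol_diff algebra_simps)
      also have "y * invol (ract a m) = ract y (madjoint m) * invol a"
        by (simp add: invol_ract ract_lact)
      also have "norm (ract y (madjoint m) * invol a - y * invol (ract a m - y))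
          \<le> norm (ract y (madjoint m) * invol a) + norm (y * invol (ract a m - y))"
        by (rule norm_triangle_ineq4)
      also have "\<dots> \<le> norm (ract y (madjoint m)) * (M * norm y) + norm y * e"
        using a by (intro add_mono order_trans[OF norm_mult_ineq] mult_left_mono) simp_all
      finally show ?thesis by (simp add: ac_simps)
    qed
    have "norm y * norm y \<le> M * norm (ract y (madjoint m)) * norm y"
    proof (rule field_le_epsilon)
      fix e :: real assume "0 < e"
      then show "norm y * norm y \<le> M * norm (ract y (madjoint m)) * norm y + e"
        using key[of "e / norm y"] False by simp
    qed
    then show ?thesis using False by (simp add: mult_le_cancel_right)
  qed (use M in simp)
  then show ?thesis using M(1) by blast
qed

lemma norm_le_ract_madjoint_mult:
  assumes "closed (left_ideal m)"
  shows "\<exists>M\<ge>0. \<forall>y\<in>left_ideal m. norm y \<le> M * norm (ract y (madjoint m * m))"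
proof -
  obtain M where M: "M \<ge> 0" "\<And>y. y \<in> left_ideal m \<Longrightarrow> norm y \<le> M * norm (ract y (madjoint m))"
    using norm_le_ract_madjoint[OF assms] by blast
  have "norm y \<le> M * M * norm (ract y (madjoint m * m))" if y: "y \<in> left_ideal m" for y
  proof -
    let ?z = "ract y (madjoint m)"
    have "(norm ?z)\<^sup>2 = norm (ract y (madjoint m * m) * invol y)"
      by (simp add: cstar_identity_right[symmetric] invol_ract ract_lact)
    then have z: "(norm ?z)\<^sup>2 \<le> norm (ract y (madjoint m * m)) * norm y"
      by (metis norm_invol norm_mult_ineq)
    have "norm y * norm y \<le> (M * norm ?z)\<^sup>2" using M y by (simp add: power2_eq_square mult_mono)
    also have "\<dots> = (M * M) * (norm ?z)\<^sup>2" by (simp add: power2_eq_square)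
    also have "\<dots> \<le> M * M * (norm (ract y (madjoint m * m)) * norm y)"
      using z M(1) by (intro mult_left_mono) simp_all
    finally show ?thesis by (cases "y = 0") (simp_all add: mult_le_cancel_right ac_simps)
  qed
  then show ?thesis using M(1) by (intro exI[of _ "M * M"]) auto
qed

section \<open>Convergence of multipliers in operator norm\<close>

definition mtendsto :: "(nat \<Rightarrow> 'a::cstar_algebra mult_alg) \<Rightarrow> 'a mult_alg \<Rightarrow> bool" where
  "mtendsto Z L \<longleftrightarrow> (\<forall>e>0. eventually (\<lambda>n. mbound (Z n - L) e) sequentially)"

definition mCauchy :: "(nat \<Rightarrow> 'a::cstar_algebra mult_alg) \<Rightarrow> bool" where
  "mCauchy Z \<longleftrightarrow> (\<forall>e>0. \<exists>N. \<forall>n\<ge>N. \<forall>k\<ge>N. mbound (Z n - Z k) e)"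

lemma mtendsto_unique:
  assumes "mtendsto Z L" "mtendsto Z L'"
  shows "L = L'"
proof -
  have "mbound (L - L') e" if "e > 0" for e
  proof -
    have "eventually (\<lambda>n. mbound (Z n - L) (e / 2) \<and> mbound (Z n - L') (e / 2)) sequentially"
      using assms that unfolding mtendsto_def by (simp add: eventually_conj)
    then obtain n where "mbound (Z n - L') (e / 2)" "mbound (Z n - L) (e / 2)"
      unfolding eventually_sequentially by auto
    then have "mbound ((Z n - L') - (Z n - L)) (e / 2 + e / 2)" by (rule mbound_diff)
    then show ?thesis by simp
  qed
  then show ?thesis using mbound_zero_iff[of "L - L'"] by simp
qed

lemma mtendsto_const: "mtendsto (\<lambda>n. L) L"
  using mbound_zero_iff[of 0] unfolding mtendsto_def by simp

lemma mtendsto_add: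
  assumes "mtendsto Z L" "mtendsto W M"
  shows "mtendsto (\<lambda>n. Z n + W n) (L + M)"
  unfolding mtendsto_def
proof (intro allI impI)
  fix e :: real assume "e > 0"
  then have "eventually (\<lambda>n. mbound (Z n - L) (e / 2) \<and> mbound (W n - M) (e / 2)) sequentially"
    using assms unfolding mtendsto_def by (simp add: eventually_conj)
  then show "eventually (\<lambda>n. mbound (Z n + W n - (L + M)) e) sequentially"
  proof eventually_elim
    case (elim n)
    then have "mbound ((Z n - L) + (W n - M)) (e / 2 + e / 2)" by (intro mbound_add) simp_all
    then show ?case by (simp add: algebra_simps)
  qed
qed

lemma mtendsto_diff:
  assumes "mtendsto Z L" "mtendsto W M"
  shows "mtendsto (\<lambda>n. Z n - W n) (L - M)"
  unfolding mtendsto_def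
proof (intro allI impI)
  fix e :: real assume "e > 0"
  then have "eventually (\<lambda>n. mbound (Z n - L) (e / 2) \<and> mbound (W n - M) (e / 2)) sequentially"
    using assms unfolding mtendsto_def by (simp add: eventually_conj)
  then show "eventually (\<lambda>n. mbound (Z n - W n - (L - M)) e) sequentially"
  proof eventually_elim
    case (elim n)
    then have "mbound ((Z n - L) - (W n - M)) (e / 2 + e / 2)" by (intro mbound_diff) simp_all
    then show ?case by (simp add: algebra_simps)
  qed
qed

lemma mtendsto_mult_right:
  assumes "mtendsto Z L"
  shows "mtendsto (\<lambda>n. Z n * Y) (L * Y)"
  unfolding mtendsto_def
proof (intro allI impI)
  fix e :: real assume e: "e > 0"
  obtain K where K: "K \<ge> 0" "mbound Y K" using mult_alg_bounded by blast
  have "eventually (\<lambda>n. mbound (Z n - L) (e / (K + 1))) sequentially"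
    using assms e K(1) unfolding mtendsto_def by simp
  then show "eventually (\<lambda>n. mbound (Z n * Y - L * Y) e) sequentially"
  proof eventually_elim
    case (elim n)
    then have "mbound ((Z n - L) * Y) (e / (K + 1) * K)" using K by (intro mbound_mult)
    moreover have "e / (K + 1) * K \<le> e" using e K(1) by (simp add: field_simps)
    ultimately show ?case by (simp add: left_diff_distrib mbound_mono)
  qed
qed

lemma mtendsto_mult_left:
  assumes "mtendsto Z L"
  shows "mtendsto (\<lambda>n. Y * Z n) (Y * L)"
  unfolding mtendsto_def
proof (intro allI impI)
  fix e :: real assume e: "e > 0"
  obtain K where K: "K \<ge> 0" "mbound Y K" using mult_alg_bounded by blast
  have "eventually (\<lambda>n. mbound (Z n - L) (e / (K + 1))) sequentially"
    using assms e K(1) unfolding mtendsto_def by simp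
  then show "eventually (\<lambda>n. mbound (Y * Z n - Y * L) e) sequentially"
  proof eventually_elim
    case (elim n)
    then have "mbound (Y * (Z n - L)) (K * (e / (K + 1)))" using K e by (intro mbound_mult) simp_all
    moreover have "K * (e / (K + 1)) \<le> e" using e K(1) by (simp add: field_simps)
    ultimately show ?case by (simp add: right_diff_distrib mbound_mono)
  qed
qed

lemma mtendsto_madjoint: "mtendsto Z L \<Longrightarrow> mtendsto (\<lambda>n. madjoint (Z n)) (madjoint L)"
  unfolding mtendsto_def by (metis (no_types, lifting) eventually_mono madjoint_diff mbound_madjoint)

lemma mtendsto_zeroI:
  assumes "\<And>n. mbound (Z n) (r n)" "r \<longlonglongrightarrow> 0"
  shows "mtendsto Z 0"
  unfolding mtendsto_def
proof (intro allI impI)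
  fix e :: real assume "e > 0"
  then have "eventually (\<lambda>n. dist (r n) 0 < e) sequentially"
    using assms(2) tendsto_iff by blast
  then show "eventually (\<lambda>n. mbound (Z n - 0) e) sequentially"
  proof eventually_elim
    case (elim n)
    then have "r n \<le> e" by (simp add: dist_real_def)
    then show ?case using mbound_mono[OF assms(1)] by simp
  qed
qed

lemma norm_less_of_mbound:
  assumes "mbound X (e / (norm b + 1))" "e > 0"
  shows "norm (ract b X) < e" "norm (lact X b) < e"
proof -
  have "e / (norm b + 1) * norm b < e / (norm b + 1) * (norm b + 1)"
    using assms(2) by (intro mult_strict_left_mono) (simp_all add: add_nonneg_pos)
  also have "\<dots> = e" using add_nonneg_pos[OF norm_ge_zero zero_less_one, of b] by simp
  finally show "norm (ract b X) < e" "norm (lact X b) < e"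
    using mboundD[OF assms(1), of b] norm_lact_le[OF assms(1), of b] by linarith+
qed

lemma ract_mtendsto: "mtendsto Z L \<Longrightarrow> (\<lambda>n. ract b (Z n)) \<longlonglongrightarrow> ract b L"
  unfolding tendsto_iff
proof (intro allI impI)
  fix e :: real assume "mtendsto Z L" "e > 0"
  then have "eventually (\<lambda>n. mbound (Z n - L) (e / (norm b + 1))) sequentially"
    unfolding mtendsto_def by (simp add: add_nonneg_pos)
  then show "eventually (\<lambda>n. dist (ract b (Z n)) (ract b L) < e) sequentially"
    by eventually_elim (use \<open>e > 0\<close> norm_less_of_mbound(1) in \<open>fastforce simp: dist_norm\<close>)
qed

lemma mCauchy_ract: "mCauchy Z \<Longrightarrow> Cauchy (\<lambda>n. ract b (Z n))"
proof (rule CauchyI)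
  fix e :: real assume "mCauchy Z" "e > 0"
  then obtain N where "\<forall>n\<ge>N. \<forall>k\<ge>N. mbound (Z n - Z k) (e / (norm b + 1))"
    unfolding mCauchy_def by (meson add_nonneg_pos divide_pos_pos norm_ge_zero zero_less_one)
  then show "\<exists>N. \<forall>n\<ge>N. \<forall>k\<ge>N. norm (ract b (Z n) - ract b (Z k)) < e"
    using norm_less_of_mbound(1)[OF _ \<open>e > 0\<close>] by (metis ract_minus_mult_alg)
qed

lemma mCauchy_lact: "mCauchy Z \<Longrightarrow> Cauchy (\<lambda>n. lact (Z n) b)"
proof (rule CauchyI)
  fix e :: real assume "mCauchy Z" "e > 0"
  then obtain N where "\<forall>n\<ge>N. \<forall>k\<ge>N. mbound (Z n - Z k) (e / (norm b + 1))"
    unfolding mCauchy_def by (meson add_nonneg_pos divide_pos_pos norm_ge_zero zero_less_one)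
  then show "\<exists>N. \<forall>n\<ge>N. \<forall>k\<ge>N. norm (lact (Z n) b - lact (Z k) b) < e"
    using norm_less_of_mbound(2)[OF _ \<open>e > 0\<close>] by (metis lact_minus_mult_alg)
qed

text \<open>Completeness: the pointwise limits of a Cauchy sequence form a multiplier.\<close>

lemma mCauchy_imp_mtendsto:
  assumes "mCauchy Z"
  shows "\<exists>L. mtendsto Z L"
proof -
  define R where "R b = lim (\<lambda>n. ract b (Z n))" for b
  define L where "L b = lim (\<lambda>n. lact (Z n) b)" for b
  have R: "(\<lambda>n. ract b (Z n)) \<longlonglongrightarrow> R b" for b
    unfolding R_def using mCauchy_ract[OF assms] by (simp add: Cauchy_convergent_iff convergent_LIMSEQ_iff)
  have L: "(\<lambda>n. lact (Z n) b) \<longlonglongrightarrow> L b" for b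
    unfolding L_def using mCauchy_lact[OF assms] by (simp add: Cauchy_convergent_iff convergent_LIMSEQ_iff)
  have "a * L b = R a * b" for a b
  proof -
    have "(\<lambda>n. a * lact (Z n) b) \<longlonglongrightarrow> a * L b" "(\<lambda>n. ract a (Z n) * b) \<longlonglongrightarrow> R a * b"
      by (intro tendsto_intros L R)+
    then show ?thesis by (simp add: ract_lact LIMSEQ_unique)
  qed
  then have ract_lim: "ract b (Abs_mult_alg (L, R)) = R b" for b
    by (simp add: ract_Abs is_multiplier_pointwise)
  have "mtendsto Z (Abs_mult_alg (L, R))"
    unfolding mtendsto_def eventually_sequentially
  proof (intro allI impI)
    fix e :: real assume "e > 0"
    then obtain N where N: "\<forall>n\<ge>N. \<forall>k\<ge>N. mbound (Z n - Z k) e" using assms mCauchy_def by blast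
    have "mbound (Z n - Abs_mult_alg (L, R)) e" if "n \<ge> N" for n
      unfolding mbound_def
    proof
      fix b
      have "(\<lambda>k. norm (ract b (Z n) - ract b (Z k))) \<longlonglongrightarrow> norm (ract b (Z n) - R b)"
        by (intro tendsto_intros R)
      moreover have "\<forall>k\<ge>N. norm (ract b (Z n) - ract b (Z k)) \<le> e * norm b"
        using N that by (metis ract_minus_mult_alg mboundD)
      ultimately show "norm (ract b (Z n - Abs_mult_alg (L, R))) \<le> e * norm b"
        using LIMSEQ_le_const2 by (fastforce simp: ract_lim)
    qed
    then show "\<exists>N. \<forall>n\<ge>N. mbound (Z n - Abs_mult_alg (L, R)) e" by blast
  qed
  then show ?thesis by blast
qed

lemma mtendsto_sum_summable:
  assumes f: "\<And>k. mbound (f k) (r k)" and r: "summable r"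
  shows "\<exists>L. mtendsto (\<lambda>n. \<Sum>k<n. f k) L"
proof (rule mCauchy_imp_mtendsto)
  show "mCauchy (\<lambda>n. \<Sum>k<n. f k)"
    unfolding mCauchy_def
  proof (intro allI impI)
    fix e :: real assume "e > 0"
    then obtain N where N: "\<And>j n. j \<ge> N \<Longrightarrow> norm (sum r {j..<n}) < e"
      using r unfolding summable_Cauchy by blast
    have tail: "mbound ((\<Sum>k<n. f k) - (\<Sum>k<j. f k)) e" if "N \<le> j" "j \<le> n" for j n
    proof -
      have "(\<Sum>k<n. f k) - (\<Sum>k<j. f k) = sum f {j..<n}"
        using sum_diff_nat_ivl[of 0 j n f] that by (simp add: atLeast0LessThan)
      moreover have "mbound (sum f {j..<n}) (sum r {j..<n})" using f by (rule mbound_sum)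
      moreover have "sum r {j..<n} \<le> e" using N[of j n] that by simp
      ultimately show ?thesis by (simp add: mbound_mono)
    qed
    have "mbound ((\<Sum>k<n. f k) - (\<Sum>k<j. f k)) e" if "N \<le> j" "N \<le> n" for j n
    proof (cases "j \<le> n")
      case False
      then have "mbound (- ((\<Sum>k<j. f k) - (\<Sum>k<n. f k))) e" using tail that by (intro mbound_uminus) simp
      then show ?thesis by simp
    qed (use tail that in simp)
    then show "\<exists>N. \<forall>n\<ge>N. \<forall>k\<ge>N. mbound ((\<Sum>k<n. f k) - (\<Sum>k<k. f k)) e" by blast
  qed
qed

section \<open>Closed *-subalgebras of the multiplier algebra\<close>

locale closed_star_subalgebra =
  fixes Q :: "'a::cstar_algebra mult_alg set"
  assumes zero_mem: "0 \<in> Q"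
    and add_mem: "X \<in> Q \<Longrightarrow> Y \<in> Q \<Longrightarrow> X + Y \<in> Q"
    and mult_mem: "X \<in> Q \<Longrightarrow> Y \<in> Q \<Longrightarrow> X * Y \<in> Q"
    and mscalar_mult_mem: "X \<in> Q \<Longrightarrow> mscalar c * X \<in> Q"
    and madjoint_mem: "X \<in> Q \<Longrightarrow> madjoint X \<in> Q"
    and mtendsto_mem: "(\<And>n. Z n \<in> Q) \<Longrightarrow> mtendsto Z L \<Longrightarrow> L \<in> Q"
begin

lemma uminus_mem: "X \<in> Q \<Longrightarrow> - X \<in> Q"
proof -
  have "mscalar (- 1) * X = - X" by (rule mult_alg_eqI) (simp add: cscale_minus_left cscale_one)
  then show "X \<in> Q \<Longrightarrow> - X \<in> Q" using mscalar_mult_mem[of X "- 1"] by simp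
qed

lemma diff_mem: "X \<in> Q \<Longrightarrow> Y \<in> Q \<Longrightarrow> X - Y \<in> Q"
  using add_mem[of X "- Y"] uminus_mem by simp

lemma sum_mem: "(\<And>k. k \<in> A \<Longrightarrow> f k \<in> Q) \<Longrightarrow> sum f A \<in> Q"
  by (induction A rule: infinite_finite_induct) (simp_all add: zero_mem add_mem)

lemma power_Suc_mem: "X \<in> Q \<Longrightarrow> X ^ Suc n \<in> Q"
  by (induction n) (simp_all add: mult_mem)

lemma power_minus_one_mem: "U - 1 \<in> Q \<Longrightarrow> U ^ n - 1 \<in> Q"
proof (induction n)
  case (Suc n)
  have "U ^ Suc n - 1 = (U - 1) + (U ^ n - 1) + (U - 1) * (U ^ n - 1)"
    by (simp add: algebra_simps)
  show ?case unfolding \<open>U ^ Suc n - 1 = _\<close> by (intro add_mem mult_mem Suc.prems Suc.IH)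
qed (simp add: zero_mem)

lemma neumann_series:
  assumes T: "T \<in> Q" "mbound T r" "0 \<le> r" "r < 1"
  obtains v where "v \<in> Q" "(1 - T) * (1 + v) = 1" "(1 + v) * (1 - T) = 1"
proof -
  define S where "S n = (\<Sum>k<n. T ^ Suc k)" for n
  have "summable (\<lambda>k. r * r ^ k)" using T by (intro summable_mult summable_geometric) simp
  then obtain v where v: "mtendsto S v"
    using mtendsto_sum_summable[of "\<lambda>k. T ^ Suc k" "\<lambda>k. r ^ Suc k"] mbound_power T
    unfolding S_def by fastforce
  have "v \<in> Q" by (rule mtendsto_mem[OF _ v]) (unfold S_def, intro sum_mem power_Suc_mem T(1))
  have partial_sum: "1 + S n = (\<Sum>k<Suc n. T ^ k)" for n
    unfolding S_def sum.lessThan_Suc_shift by simp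
  have left: "(1 - T) * (1 + S n) = 1 - T ^ Suc n" and right: "(1 + S n) * (1 - T) = 1 - T ^ Suc n" for n
    by (simp_all only: partial_sum one_minus_mult_sum_power sum_power_mult_one_minus)
  have "mtendsto (\<lambda>n. T ^ Suc n) 0"
  proof (rule mtendsto_zeroI)
    show "mbound (T ^ Suc n) (r ^ Suc n)" for n using T by (intro mbound_power)
    show "(\<lambda>n. r ^ Suc n) \<longlonglongrightarrow> 0" using T by (intro LIMSEQ_Suc LIMSEQ_power_zero) simp
  qed
  then have lim1: "mtendsto (\<lambda>n. 1 - T ^ Suc n) 1" using mtendsto_diff[OF mtendsto_const] by fastforce
  have "mtendsto (\<lambda>n. 1 - T ^ Suc n) ((1 - T) * (1 + v))"
    using mtendsto_mult_left[OF mtendsto_add[OF mtendsto_const v], of "1 - T" 1] unfolding left .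
  then have "(1 - T) * (1 + v) = 1" using lim1 by (rule mtendsto_unique)
  moreover have "mtendsto (\<lambda>n. 1 - T ^ Suc n) ((1 + v) * (1 - T))"
    using mtendsto_mult_right[OF mtendsto_add[OF mtendsto_const v], of 1 "1 - T"] unfolding right .
  then have "(1 + v) * (1 - T) = 1" using lim1 by (rule mtendsto_unique)
  ultimately show ?thesis using \<open>v \<in> Q\<close> that by blast
qed

text \<open>The Cayley transform \<open>U = (1 - T)\<^sup>* (1 - T)\<^sup>-\<^sup>1\<close> of a skew-adjoint \<open>T\<close>.\<close>

lemma cayley_transform:
  assumes T: "T \<in> Q" "madjoint T = - T" "mbound T (1/2)"
  obtains U where "U * madjoint U = 1" "U - 1 \<in> Q" "(1 - U) * (1 - T) = - (T + T)"
proof -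
  have "0 \<le> (1/2::real)" "(1/2::real) < 1" by simp_all
  then obtain v where v: "v \<in> Q" "(1 - T) * (1 + v) = 1" "(1 + v) * (1 - T) = 1"
    using neumann_series[OF T(1,3)] by blast
  define N where "N = 1 + v"
  have N: "(1 - T) * N = 1" "N * (1 - T) = 1" using v by (simp_all add: N_def)
  have commute: "(1 + T) * N = N * (1 + T)"
    by (rule inverse_commute[OF N]) (simp add: algebra_simps)
  have "madjoint (N * (1 - T)) = 1" using N(2) by simp
  then have adjoint_N: "(1 + T) * madjoint N = 1" using T(2) by (simp add: madjoint_mult madjoint_diff)
  define U where "U = (1 + T) * N"
  have "U * madjoint U = (N * (1 + T)) * madjoint ((1 + T) * N)" using commute by (simp add: U_def)
  also have "\<dots> = N * ((1 + T) * madjoint N) * (1 - T)"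
    using T(2) by (simp add: madjoint_mult madjoint_add mult.assoc)
  finally have unitary: "U * madjoint U = 1" using adjoint_N N(2) by simp
  have "U - 1 = T + v + T * v" by (simp add: U_def N_def algebra_simps)
  then have mem: "U - 1 \<in> Q" using T(1) v(1) by (simp add: add_mem mult_mem)
  have "(1 - U) * (1 - T) = (1 - T) - (1 + T) * (N * (1 - T))"
    unfolding U_def by (simp add: left_diff_distrib mult.assoc)
  also have "\<dots> = (1 - T) - (1 + T)" using N(2) by simp
  also have "\<dots> = - (T + T)" by (simp add: algebra_simps)
  finally show ?thesis using that unitary mem by blast
qed

lemma cayley_geometric_sums:
  assumes s: "s \<in> Q" "madjoint s = s" "mbound s (1/2)"
  obtains U where "U - 1 \<in> Q" "\<And>n. mbound ((\<Sum>k<n. U ^ k) * s) (3/2)"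
proof -
  define T where "T = mscalar \<i> * s"
  have T_mem: "T \<in> Q" using s(1) by (simp add: T_def mscalar_mult_mem)
  have T_adj: "madjoint T = - T"
    using s(2) by (simp add: T_def madjoint_mult madjoint_mscalar mscalar_minus mscalar_commute[of _ s])
  have T_bound: "mbound T (1/2)" using mbound_mult[OF mbound_mscalar[of \<i>] s(3)] by (simp add: T_def)
  obtain U where U: "U * madjoint U = 1" "U - 1 \<in> Q" "(1 - U) * (1 - T) = - (T + T)"
    by (rule cayley_transform[OF T_mem T_adj T_bound])
  have "mbound (1 - T) (1 + 1/2)" by (rule mbound_diff[OF mbound_one T_bound])
  then have "mbound ((\<Sum>k<n. U ^ k) * - (T + T)) (2 * (1 + 1/2))" for n
    by (rule mbound_geometric_sum_unitary[OF U(1) U(3)]) simp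
  then have "mbound (mscalar (\<i> / 2) * ((\<Sum>k<n. U ^ k) * - (T + T))) (cmod (\<i> / 2) * (2 * (1 + 1/2)))"
    for n by (rule mbound_mult[OF mbound_mscalar]) simp
  then have bound: "mbound (mscalar (\<i> / 2) * ((\<Sum>k<n. U ^ k) * - (T + T))) (3/2)" for n
    by (simp add: norm_divide)
  have rescale: "mscalar (\<i> / 2) * (X * - (T + T)) = X * s" for X
  proof -
    have "T + T = (mscalar \<i> + mscalar \<i>) * s" by (simp add: T_def distrib_right)
    also have "\<dots> = mscalar (2 * \<i>) * s" by (metis mscalar_add mult_2)
    finally have "T + T = mscalar (2 * \<i>) * s" .
    then have "X * - (T + T) = mscalar (- (2 * \<i>)) * (X * s)"
      by (simp add: mscalar_minus mult_mscalar_left)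
    then have "mscalar (\<i> / 2) * (X * - (T + T)) = mscalar (\<i> / 2 * - (2 * \<i>)) * (X * s)"
      by (simp only: mscalar_mult mult.assoc)
    also have "\<i> / 2 * - (2 * \<i>) = 1" by simp
    finally show ?thesis by simp
  qed
  show ?thesis
  proof (rule that[OF U(2)])
    show "mbound ((\<Sum>k<n. U ^ k) * s) (3/2)" for n using bound[of n] by (simp only: rescale)
  qed
qed

lemma approximate_right_unit:
  assumes s: "s \<in> Q" "madjoint s = s" "mbound s (1/2)" and e: "e > 0"
  shows "\<exists>w\<in>Q. mbound (w * s - s) e"
proof -
  obtain U where U: "U - 1 \<in> Q" "\<And>n. mbound ((\<Sum>k<n. U ^ k) * s) (3/2)"
    using cayley_geometric_sums[OF s] by metis
  obtain K :: nat where K: "3 / (2 * e) < real K" using reals_Archimedean2 by blast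
  moreover have "0 < 3 / (2 * e)" using e by simp
  ultimately have "K > 0" by linarith
  define w where "w = - (mscalar (1 / of_nat K) * (\<Sum>k<K. U ^ k - 1))"
  have "w \<in> Q" unfolding w_def using U(1) by (intro uminus_mem mscalar_mult_mem sum_mem power_minus_one_mem)
  have "mscalar (1 / of_nat K) * (mscalar (of_nat K) * s) = mscalar (1 / of_nat K * of_nat K) * s"
    by (simp only: mult.assoc[symmetric] mscalar_mult[symmetric])
  then have cancel: "mscalar (1 / of_nat K) * (mscalar (of_nat K) * s) = s" using \<open>K > 0\<close> by simp
  have sum_eq: "(\<Sum>k<K. U ^ k - 1) = (\<Sum>k<K. U ^ k) - mscalar (of_nat K)"
    by (simp add: sum_subtractf sum_one_mult_alg)
  have "w * s = - (mscalar (1 / of_nat K) * ((\<Sum>k<K. U ^ k) * s))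
      + mscalar (1 / of_nat K) * (mscalar (of_nat K) * s)"
    unfolding w_def sum_eq by (simp add: algebra_simps)
  then have "w * s - s = - (mscalar (1 / of_nat K) * ((\<Sum>k<K. U ^ k) * s))"
    by (simp add: cancel)
  moreover have "mbound (mscalar (1 / of_nat K) * ((\<Sum>k<K. U ^ k) * s)) (1 / real K * (3/2))"
    using mbound_mult[OF mbound_mscalar[of "1 / of_nat K"] U(2)[of K]] by (simp add: norm_divide)
  moreover have "1 / real K * (3/2) \<le> e" using K e \<open>K > 0\<close> by (simp add: field_simps)
  ultimately show ?thesis using \<open>w \<in> Q\<close> by (metis mbound_mono mbound_uminus)
qed

lemma right_unit_of_lower_bound:
  assumes approx: "\<And>e. e > 0 \<Longrightarrow> \<exists>w\<in>Q. mbound (w * s - s) e"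
    and lower: "\<And>X r. X \<in> Q \<Longrightarrow> mbound (X * s) r \<Longrightarrow> mbound X (\<kappa> * r)"
  shows "\<exists>w\<in>Q. w * s = s"
proof -
  have "\<forall>n. \<exists>w\<in>Q. mbound (w * s - s) (1 / real (Suc n))" using approx by simp
  then obtain W where W: "\<And>n. W n \<in> Q" "\<And>n. mbound (W n * s - s) (1 / real (Suc n))" by metis
  have "mCauchy W"
    unfolding mCauchy_def
  proof (intro allI impI)
    fix e :: real assume "e > 0"
    have "(\<lambda>N. 2 * \<kappa> / real (Suc N)) \<longlonglongrightarrow> 0" by (rule LIMSEQ_Suc[OF lim_const_over_n])
    then have "eventually (\<lambda>N. 2 * \<kappa> / real (Suc N) < e) sequentially"
      using \<open>e > 0\<close> by (rule order_tendstoD(2))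
    then obtain N where N: "2 * \<kappa> / real (Suc N) < e" unfolding eventually_sequentially by auto
    have "mbound (W n - W k) e" if "n \<ge> N" "k \<ge> N" for n k
    proof -
      have "mbound ((W n * s - s) - (W k * s - s)) (1 / real (Suc n) + 1 / real (Suc k))"
        by (rule mbound_diff[OF W(2) W(2)])
      moreover have "1 / real (Suc n) \<le> 1 / real (Suc N)" "1 / real (Suc k) \<le> 1 / real (Suc N)"
        using that by (simp_all add: frac_le)
      then have "1 / real (Suc n) + 1 / real (Suc k) \<le> 2 / real (Suc N)" by simp
      ultimately have "mbound ((W n - W k) * s) (2 / real (Suc N))"
        by (simp add: left_diff_distrib mbound_mono)
      then have "mbound (W n - W k) (\<kappa> * (2 / real (Suc N)))" using W(1) by (intro lower diff_mem)
      moreover have "\<kappa> * (2 / real (Suc N)) \<le> e" using N by (simp add: mult.commute)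
      ultimately show ?thesis by (rule mbound_mono)
    qed
    then show "\<exists>N. \<forall>n\<ge>N. \<forall>k\<ge>N. mbound (W n - W k) e" by blast
  qed
  then obtain w where w: "mtendsto W w" using mCauchy_imp_mtendsto by blast
  have "mtendsto (\<lambda>n. W n * s - s) (w * s - s)"
    by (intro mtendsto_diff mtendsto_mult_right w mtendsto_const)
  moreover have "mtendsto (\<lambda>n. W n * s - s) 0"
    by (rule mtendsto_zeroI[OF W(2)]) (rule LIMSEQ_Suc[OF lim_const_over_n])
  ultimately have "w * s - s = 0" by (rule mtendsto_unique)
  moreover have "w \<in> Q" using W(1) w by (rule mtendsto_mem)
  ultimately show ?thesis by auto
qed

lemma closed_star_subalgebra_Collect:
  assumes "P 0" and "\<And>X Y. P X \<Longrightarrow> P Y \<Longrightarrow> P (X + Y)" and "\<And>X Y. P X \<Longrightarrow> P Y \<Longrightarrow> P (X * Y)"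
    and "\<And>X c. P X \<Longrightarrow> P (mscalar c * X)" and "\<And>X. P X \<Longrightarrow> P (madjoint X)"
    and "\<And>Z L. mtendsto Z L \<Longrightarrow> (\<And>n. P (Z n)) \<Longrightarrow> P L"
  shows "closed_star_subalgebra {X \<in> Q. P X}"
proof
  show "0 \<in> {X \<in> Q. P X}" using assms(1) zero_mem by simp
next
  fix X Y c assume X: "X \<in> {X \<in> Q. P X}" and Y: "Y \<in> {X \<in> Q. P X}"
  show "X + Y \<in> {X \<in> Q. P X}" using X Y assms(2) add_mem by simp
  show "X * Y \<in> {X \<in> Q. P X}" using X Y assms(3) mult_mem by simp
  show "mscalar c * X \<in> {X \<in> Q. P X}" using X assms(4) mscalar_mult_mem by simp
  show "madjoint X \<in> {X \<in> Q. P X}" using X assms(5) madjoint_mem by simp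
next
  fix Z L assume Z: "\<And>n. Z n \<in> {X \<in> Q. P X}" and "mtendsto Z L"
  have ZQ: "\<And>n. Z n \<in> Q" and ZP: "\<And>n. P (Z n)" using Z by simp_all
  have "L \<in> Q" using ZQ \<open>mtendsto Z L\<close> by (rule mtendsto_mem)
  moreover have "P L" using \<open>mtendsto Z L\<close> ZP by (rule assms(6))
  ultimately show "L \<in> {X \<in> Q. P X}" by simp
qed

lemma closed_star_subalgebra_into_left_ideal:
  assumes closed: "closed (left_ideal m)"
  shows "closed_star_subalgebra
    {X \<in> Q. \<forall>b. ract b X \<in> left_ideal m \<and> ract b (madjoint X) \<in> left_ideal m}"
    (is "closed_star_subalgebra {X \<in> Q. ?P X}")
proof (rule closed_star_subalgebra_Collect)
  have "ract 0 m \<in> left_ideal m" by (rule rangeI)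
  then show "?P 0" by simp
  have "ract a m + ract a' m \<in> left_ideal m" for a a'
    using rangeI[of "\<lambda>a. ract a m" "a + a'"] by simp
  then have add_ideal: "u + v \<in> left_ideal m" if "u \<in> left_ideal m" "v \<in> left_ideal m" for u v
    using that by blast
  show "?P (X + Y)" if "?P X" "?P Y" for X Y
    using that by (simp add: madjoint_add add_ideal)
  show "?P (X * Y)" if "?P X" "?P Y" for X Y
    using that by (simp add: madjoint_mult)
  have "cscale c (ract a m) \<in> left_ideal m" for c a
    using rangeI[of "\<lambda>a. ract a m" "cscale c a"] by simp
  then have scale_ideal: "cscale c u \<in> left_ideal m" if "u \<in> left_ideal m" for c u
    using that by blast
  show "?P (mscalar c * X)" if "?P X" for c X
    using that by (simp add: madjoint_mult madjoint_mscalar scale_ideal)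
  show "?P (madjoint X)" if "?P X" for X
    using that by simp
  have limit: "ract b L \<in> left_ideal m" if "mtendsto Z L" "\<And>n. ract b (Z n) \<in> left_ideal m" for Z L b
    using closed_sequentially[OF closed that(2) ract_mtendsto[OF that(1)]] .
  show "?P L" if "mtendsto Z L" "\<And>n. ?P (Z n)" for Z L
    using limit[OF that(1)] limit[OF mtendsto_madjoint[OF that(1)]] that(2) by simp
qed

end

section \<open>Projections onto closed principal left ideals\<close>

lemma projection_of_right_unit:
  assumes unit: "w * (madjoint m * m) = madjoint m * m"
    and range: "\<And>b. ract b w \<in> left_ideal m"
  shows "madjoint w = w \<and> w * w = w \<and> left_ideal w = left_ideal m"
proof -
  define h where "h = madjoint m * m"
  define e where "e = madjoint w"
  have w_h: "w * h = h" using unit by (simp add: h_def)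
  have h_e: "h * e = h" using arg_cong[OF w_h, of madjoint] by (simp add: h_def e_def madjoint_mult)
  have "madjoint (m - m * e) * (m - m * e) = h - h * e - madjoint e * h + madjoint e * h * e"
    by (simp add: h_def madjoint_diff madjoint_mult algebra_simps)
  also have "\<dots> = 0" using h_e w_h by (simp add: e_def)
  finally have "m - m * e = 0" by (rule madjoint_mult_self_eq_0)
  then have m_e: "m * e = m" by simp
  have fix_e: "ract y e = y" if y: "y \<in> left_ideal m" for y
  proof -
    obtain a where "y = ract a m" using y by blast
    then show ?thesis using m_e by (metis ract_times_mult_alg)
  qed
  have w_e: "w * e = w" by (rule mult_alg_eqI) (simp add: fix_e range)
  have "madjoint w = madjoint (w * e)" by (simp add: w_e)
  also have "\<dots> = w * e" by (simp add: e_def madjoint_mult)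
  finally have adjoint: "madjoint w = w" using w_e by simp
  then have "w * w = w" using w_e by (simp add: e_def)
  moreover have "left_ideal m \<subseteq> left_ideal w"
    using fix_e adjoint unfolding e_def by (metis rangeI subsetI)
  ultimately show ?thesis using adjoint range by blast
qed

lemma mbound_of_lower_bound:
  assumes lower: "\<And>y. y \<in> left_ideal m \<Longrightarrow> norm y \<le> M * norm (ract y h)"
    and X: "\<And>b. ract b X \<in> left_ideal m"
    and bound: "mbound (X * (mscalar (complex_of_real t) * h)) r"
    and t: "t > 0" and M: "M \<ge> 0"
  shows "mbound X (M / t * r)"
  unfolding mbound_def
proof
  fix b
  have "norm (ract b (X * (mscalar (complex_of_real t) * h))) = t * norm (ract (ract b X) h)"
    using t by (simp add: norm_cscale)
  moreover have "norm (ract b X) \<le> M * norm (ract (ract b X) h)" by (rule lower[OF X])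
  ultimately have "norm (ract b X) \<le> M / t * norm (ract b (X * (mscalar (complex_of_real t) * h)))"
    using t by simp
  also have "\<dots> \<le> M / t * (r * norm b)"
    using mboundD[OF bound] t M by (intro mult_left_mono) simp_all
  finally show "norm (ract b X) \<le> M / t * r * norm b" by (simp add: ac_simps)
qed

context closed_star_subalgebra
begin

lemma closed_left_ideal_right_unit:
  assumes m: "m \<in> Q" "closed (left_ideal m)"
  shows "\<exists>w\<in>Q. (\<forall>b. ract b w \<in> left_ideal m) \<and> w * (madjoint m * m) = madjoint m * m"
proof -
  define h where "h = madjoint m * m"
  define QJ where "QJ = {X \<in> Q. \<forall>b. ract b X \<in> left_ideal m \<and> ract b (madjoint X) \<in> left_ideal m}"
  interpret QJ: closed_star_subalgebra QJ
    unfolding QJ_def by (rule closed_star_subalgebra_into_left_ideal[OF m(2)])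
  obtain K where K: "K \<ge> 0" "mbound h K" using mult_alg_bounded by blast
  obtain M where M: "M \<ge> 0" "\<And>y. y \<in> left_ideal m \<Longrightarrow> norm y \<le> M * norm (ract y h)"
    using norm_le_ract_madjoint_mult[OF m(2)] unfolding h_def by blast
  define t where "t = 1 / (2 * (K + 1))"
  have t: "t > 0" using K(1) by (simp add: t_def)
  define s where "s = mscalar (complex_of_real t) * h"
  have s_adjoint: "madjoint s = s"
    by (simp add: s_def h_def madjoint_mult madjoint_mscalar mscalar_commute[of _ "madjoint m * m"])
  have "ract b s = ract (ract b (mscalar (complex_of_real t) * madjoint m)) m" for b
    by (simp add: s_def h_def)
  then have "ract b s \<in> left_ideal m" for b by (metis rangeI)
  moreover have "s \<in> Q" unfolding s_def h_def using m(1) by (intro mscalar_mult_mem mult_mem madjoint_mem)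
  ultimately have s_mem: "s \<in> QJ" by (simp add: QJ_def s_adjoint)
  have "mbound s (t * K)"
    using mbound_mult[OF mbound_mscalar[of "complex_of_real t"] K(2)] K(1) t by (simp add: s_def)
  moreover have "t * K \<le> 1/2" using K(1) by (simp add: t_def field_simps)
  ultimately have s_bound: "mbound s (1/2)" by (rule mbound_mono)
  have lower: "mbound X (M / t * r)" if "X \<in> QJ" "mbound (X * s) r" for X r
    using mbound_of_lower_bound[OF M(2) _ _ t M(1)] that unfolding QJ_def s_def by blast
  obtain w where w: "w \<in> QJ" "w * s = s"
    using QJ.right_unit_of_lower_bound[OF QJ.approximate_right_unit[OF s_mem s_adjoint s_bound] lower]
    by blast
  have h_s: "h = mscalar (complex_of_real (1 / t)) * s"
    using t by (simp add: s_def mult.assoc[symmetric] mscalar_mult[symmetric] flip: of_real_mult)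
  have "w * h = h" unfolding h_s by (simp add: mult_mscalar_left w(2))
  then show ?thesis using w(1) by (auto simp: QJ_def h_def)
qed

lemma closed_left_ideal_projection:
  assumes "m \<in> Q" "closed (left_ideal m)"
  shows "\<exists>e\<in>Q. madjoint e = e \<and> e * e = e \<and> left_ideal e = left_ideal m"
proof -
  obtain w where "w \<in> Q" "\<And>b. ract b w \<in> left_ideal m" "w * (madjoint m * m) = madjoint m * m"
    using closed_left_ideal_right_unit[OF assms] by blast
  then show ?thesis using projection_of_right_unit by blast
qed

end

lemma closed_star_subalgebra_UNIV: "closed_star_subalgebra UNIV"
  by unfold_locales simp_all

lemma mtendsto_mult_of:
  assumes Z: "\<And>n. Z n \<in> range mult_of" and L: "mtendsto Z L"
  shows "L \<in> range mult_of"
proof -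
  have "\<forall>n. \<exists>y. Z n = mult_of y" using Z by blast
  then obtain z where z: "\<And>n. Z n = mult_of (z n)" by metis
  have "Cauchy z"
  proof (rule CauchyI)
    fix e :: real assume "e > 0"
    then obtain N where N: "\<And>n. n \<ge> N \<Longrightarrow> mbound (Z n - L) (e / 3)"
      using L unfolding mtendsto_def eventually_sequentially by (meson zero_less_divide_iff zero_less_numeral)
    have "norm (z n - z k) < e" if "n \<ge> N" "k \<ge> N" for n k
    proof -
      have "mbound ((Z n - L) - (Z k - L)) (e / 3 + e / 3)" using N that by (intro mbound_diff)
      then have "norm (z n - z k) \<le> e / 3 + e / 3"
        using \<open>e > 0\<close> by (intro norm_le_of_mbound_mult_of) (simp_all add: z mult_of_diff)
      then show ?thesis using \<open>e > 0\<close> by simp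
    qed
    then show "\<exists>N. \<forall>n\<ge>N. \<forall>k\<ge>N. norm (z n - z k) < e" by blast
  qed
  then obtain z0 where z0: "z \<longlonglongrightarrow> z0" by (auto simp: Cauchy_convergent_iff convergent_def)
  have "L = mult_of z0"
  proof (rule mult_alg_eqI)
    fix b
    have "(\<lambda>n. ract b (Z n)) \<longlonglongrightarrow> b * z0" unfolding z by (simp add: tendsto_mult_left z0)
    then show "ract b L = ract b (mult_of z0)" using LIMSEQ_unique[OF ract_mtendsto[OF L]] by simp
  qed
  then show ?thesis by simp
qed

lemma closed_star_subalgebra_range_mult_of:
  "closed_star_subalgebra (range (mult_of :: 'a::cstar_algebra \<Rightarrow> 'a mult_alg))"
proof
  show "0 \<in> range (mult_of :: 'a \<Rightarrow> 'a mult_alg)" using mult_of_zero by (metis rangeI)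
  fix X Y :: "'a mult_alg" and c assume "X \<in> range mult_of" "Y \<in> range mult_of"
  then show "X + Y \<in> range mult_of" "X * Y \<in> range mult_of" "mscalar c * X \<in> range mult_of"
    "madjoint X \<in> range mult_of"
    by (auto simp flip: mult_of_add mult_of_mult simp: mscalar_mult_of madjoint_mult_of)
qed (rule mtendsto_mult_of)

lemma left_mult_set_eq_left_ideal: "left_mult_set x = left_ideal (mult_of x)"
  by (auto simp: left_mult_set_def)

lemma mult_left_mult_set_eq_left_ideal: "mult_left_mult_set (Rep_mult_alg X) = left_ideal X"
  by (auto simp: mult_left_mult_set_def ract_def)

lemma closed_left_mult_set_projection:
  assumes "closed (left_mult_set x)"
  shows "\<exists>e\<in>left_mult_set x. invol e = e \<and> e * e = e \<and> left_mult_set x = left_mult_set e"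
proof -
  obtain E where E: "E \<in> range mult_of" "madjoint E = E" "E * E = E"
      "left_ideal E = left_ideal (mult_of x)"
    using closed_star_subalgebra.closed_left_ideal_projection[OF closed_star_subalgebra_range_mult_of]
      assms by (metis left_mult_set_eq_left_ideal rangeI)
  then obtain e where e: "E = mult_of e" by blast
  have "invol e = e" using E(2) e by (simp add: madjoint_mult_of mult_of_inject)
  moreover have "e * e = e" using E(3) e by (simp flip: mult_of_mult add: mult_of_inject)
  moreover have "left_mult_set x = left_mult_set e" using E(4) e by (simp add: left_mult_set_eq_left_ideal)
  moreover have "e \<in> left_mult_set e"
    using \<open>e * e = e\<close> unfolding left_mult_set_def by (metis (mono_tags) mem_Collect_eq)
  ultimately show ?thesis by auto
qed

lemma closed_mult_left_mult_set_projection: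
  assumes "is_multiplier m" "closed (mult_left_mult_set m)"
  shows "\<exists>e. is_multiplier e \<and> mult_star e = e \<and> mult_times e e = e \<and>
    mult_left_mult_set m = mult_left_mult_set e"
proof -
  have m: "Rep_mult_alg (Abs_mult_alg m) = m" using assms(1) by (simp add: Abs_mult_alg_inverse)
  obtain E where E: "madjoint E = E" "E * E = E" "left_ideal E = left_ideal (Abs_mult_alg m)"
    using closed_star_subalgebra.closed_left_ideal_projection[OF closed_star_subalgebra_UNIV]
      assms(2) m by (metis UNIV_I mult_left_mult_set_eq_left_ideal)
  have "Rep_mult_alg (madjoint E) = mult_star (Rep_mult_alg E)"
    unfolding madjoint_def by (rule Abs_mult_alg_inverse) (simp add: is_multiplier_Rep_mult_star)
  then have "mult_star (Rep_mult_alg E) = Rep_mult_alg E" using E(1) by simp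
  moreover have "Rep_mult_alg (E * E) = mult_times (Rep_mult_alg E) (Rep_mult_alg E)"
    unfolding times_mult_alg_def by (rule Abs_mult_alg_inverse) (simp add: is_multiplier_Rep_mult_times)
  then have "mult_times (Rep_mult_alg E) (Rep_mult_alg E) = Rep_mult_alg E" using E(2) by simp
  moreover have "mult_left_mult_set m = mult_left_mult_set (Rep_mult_alg E)"
    using E(3) m by (metis mult_left_mult_set_eq_left_ideal)
  moreover have "is_multiplier (Rep_mult_alg E)" using Rep_mult_alg[of E] by simp
  ultimately show ?thesis by blast
qed

theorem proposition2p5:
  fixes x :: "'a::cstar_algebra" and m :: "'a multiplier"
  shows "(closed (left_mult_set x) \<longrightarrow>
            (\<exists>e\<in>left_mult_set x. invol e = e \<and> e * e = e \<and>
                left_mult_set x = left_mult_set e))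
       \<and> (is_multiplier m \<and> closed (mult_left_mult_set m) \<longrightarrow>
            (\<exists>e. is_multiplier e \<and> mult_star e = e \<and> mult_times e e = e \<and>
                mult_left_mult_set m = mult_left_mult_set e))"
  using closed_left_mult_set_projection closed_mult_left_mult_set_projection by blast

end
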